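(* Let $G=(V,E)$ be a digraph and let $p(x,y,z)$ be a polymorphism of $G^{\bot\top}$ such that $p(x,y,y)=x$ for all vertices $x,y$. Then, with neighbourhoods taken in $G^{\bot\top}$: (1) $a^+\subseteq p(a,b,c)^+$ for all $a,b,c\in V\cup\{\bot\}$; (2) $a^-\subseteq p(a,b,c)^-$ for all $a,b,c\in V\cup\{\top\}$; (3) if $G$ is nondismantlable, then $p(a,b,c)=a$ for all $a,b,c\in V$.
   Context: Digraphs are finite and loopless. $G^\bot$ is the digraph on $V\cup\{\bot\}$ with edges $E\cup\{(\bot,v):v\in V\}$; $G^{\bot\top}$ is the digraph on $V\cup\{\bot,\top\}$ obtained from $G^\bot$ by adding $\top$ and all edges $(v,\top)$ for $v\in V\cup\{\bot\}$. For a vertex $x$ of a digraph, $x^+$ is the set of out-neighbours and $x^-$ the set of in-neighbours. $G$ is nondismantlable if for all $v,w\in V$, $v^+\subseteq w^+$ and $v^-\subseteq w^-$ (in $G$) imply $v=w$. A ternary polymorphism of a digraph $(W,F)$ is a map $f:W^3\to W$ with $(f(a_1,a_2,a_3),f(b_1,b_2,b_3))\in F$ whenever all $(a_i,b_i)\in F$. *)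

theory Defs
  imports Main
begin

definition digraph :: "'a set \<Rightarrow> ('a \<times> 'a) set \<Rightarrow> bool" where
  "digraph V E \<longleftrightarrow> finite V \<and> E \<subseteq> V \<times> V \<and> (\<forall>v. (v, v) \<notin> E)"

datatype 'a ext = Bot | Top | Vtx 'a

definition vert_bt :: "'a set \<Rightarrow> 'a ext set" where
  "vert_bt V = Vtx ` V \<union> {Bot, Top}"

definition edges_bt :: "'a set \<Rightarrow> ('a \<times> 'a) set \<Rightarrow> ('a ext \<times> 'a ext) set" where
  "edges_bt V E =
     {(Vtx u, Vtx v) | u v. (u, v) \<in> E}
   \<union> {(Bot, Vtx v) | v. v \<in> V}
   \<union> {(x, Top) | x. x \<in> Vtx ` V \<union> {Bot}}"

definition out_nbrs :: "('b \<times> 'b) set \<Rightarrow> 'b \<Rightarrow> 'b set" where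
  "out_nbrs F x = {y. (x, y) \<in> F}"

definition in_nbrs :: "('b \<times> 'b) set \<Rightarrow> 'b \<Rightarrow> 'b set" where
  "in_nbrs F x = {y. (y, x) \<in> F}"

definition ternary_polymorphism :: "'b set \<Rightarrow> ('b \<times> 'b) set \<Rightarrow> ('b \<Rightarrow> 'b \<Rightarrow> 'b \<Rightarrow> 'b) \<Rightarrow> bool" where
  "ternary_polymorphism W F f \<longleftrightarrow>
     (\<forall>a1\<in>W. \<forall>a2\<in>W. \<forall>a3\<in>W. f a1 a2 a3 \<in> W) \<and>
     (\<forall>a1 a2 a3 b1 b2 b3. (a1, b1) \<in> F \<and> (a2, b2) \<in> F \<and> (a3, b3) \<in> F
        \<longrightarrow> (f a1 a2 a3, f b1 b2 b3) \<in> F)"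

definition nondismantlable :: "'a set \<Rightarrow> ('a \<times> 'a) set \<Rightarrow> bool" where
  "nondismantlable V E \<longleftrightarrow>
     (\<forall>v\<in>V. \<forall>w\<in>V. out_nbrs E v \<subseteq> out_nbrs E w \<and> in_nbrs E v \<subseteq> in_nbrs E w \<longrightarrow> v = w)"

end

theory Submission
  imports Defs
begin

text \<open>
  A polymorphism preserves edges, so edges a \<rightarrow> y, b \<rightarrow> t, c \<rightarrow> t give p a b c \<rightarrow> p y t t,
  and p y t t = y. In G with \<bottom> and \<top> added, \<top> is a common out-neighbour of all of
  V \<union> {\<bottom>}, and dually \<bottom> is a common in-neighbour of V \<union> {\<top>}; this gives (1) and (2).
  For a, b, c \<in> V the vertex p a b c therefore dominates a; it must itself lie in V,
  and nondismantlability forces it to be a.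
\<close>

lemma polymorphism_out_nbrs_subset:
  assumes "ternary_polymorphism W F p"
    and F: "F \<subseteq> W \<times> W"
    and sink: "\<forall>x\<in>W. p x t t = x"
    and "(b, t) \<in> F" "(c, t) \<in> F"
  shows "out_nbrs F a \<subseteq> out_nbrs F (p a b c)"
proof
  fix y assume "y \<in> out_nbrs F a"
  then have ay: "(a, y) \<in> F" by (simp add: out_nbrs_def)
  with assms have "(p a b c, p y t t) \<in> F"
    unfolding ternary_polymorphism_def by blast
  moreover have "p y t t = y" using ay F sink by blast
  ultimately show "y \<in> out_nbrs F (p a b c)" by (simp add: out_nbrs_def)
qed

lemma polymorphism_in_nbrs_subset:
  assumes "ternary_polymorphism W F p"
    and F: "F \<subseteq> W \<times> W"
    and source: "\<forall>x\<in>W. p x s s = x"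
    and "(s, b) \<in> F" "(s, c) \<in> F"
  shows "in_nbrs F a \<subseteq> in_nbrs F (p a b c)"
proof
  fix y assume "y \<in> in_nbrs F a"
  then have ya: "(y, a) \<in> F" by (simp add: in_nbrs_def)
  with assms have "(p y s s, p a b c) \<in> F"
    unfolding ternary_polymorphism_def by blast
  moreover have "p y s s = y" using ya F source by blast
  ultimately show "y \<in> in_nbrs F (p a b c)" by (simp add: in_nbrs_def)
qed

lemma edges_bt_subset: "E \<subseteq> V \<times> V \<Longrightarrow> edges_bt V E \<subseteq> vert_bt V \<times> vert_bt V"
  by (auto simp: edges_bt_def vert_bt_def)

lemma edges_bt_Top_iff: "(x, Top) \<in> edges_bt V E \<longleftrightarrow> x \<in> Vtx ` V \<union> {Bot}"
  by (auto simp: edges_bt_def)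

lemma edges_bt_Bot_iff: "(Bot, x) \<in> edges_bt V E \<longleftrightarrow> x \<in> Vtx ` V \<union> {Top}"
  by (auto simp: edges_bt_def)

lemma edges_bt_Vtx_iff [simp]: "(Vtx u, Vtx v) \<in> edges_bt V E \<longleftrightarrow> (u, v) \<in> E"
  by (auto simp: edges_bt_def)

lemma out_nbrs_edges_bt_Vtx_subsetD:
  assumes "out_nbrs (edges_bt V E) (Vtx u) \<subseteq> out_nbrs (edges_bt V E) (Vtx w)"
  shows "out_nbrs E u \<subseteq> out_nbrs E w"
proof
  fix v assume "v \<in> out_nbrs E u"
  then have "Vtx v \<in> out_nbrs (edges_bt V E) (Vtx u)" by (simp add: out_nbrs_def)
  with assms have "Vtx v \<in> out_nbrs (edges_bt V E) (Vtx w)" ..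
  then show "v \<in> out_nbrs E w" by (simp add: out_nbrs_def)
qed

lemma in_nbrs_edges_bt_Vtx_subsetD:
  assumes "in_nbrs (edges_bt V E) (Vtx u) \<subseteq> in_nbrs (edges_bt V E) (Vtx w)"
  shows "in_nbrs E u \<subseteq> in_nbrs E w"
proof
  fix v assume "v \<in> in_nbrs E u"
  then have "Vtx v \<in> in_nbrs (edges_bt V E) (Vtx u)" by (simp add: in_nbrs_def)
  with assms have "Vtx v \<in> in_nbrs (edges_bt V E) (Vtx w)" ..
  then show "v \<in> in_nbrs E w" by (simp add: in_nbrs_def)
qed

text \<open>
  \<top> has no out-neighbours and \<bottom> no in-neighbours, while Vtx a has \<top> as out-neighbour
  and \<bottom> as in-neighbour; so a vertex dominating Vtx a is itself a vertex of G.
\<close>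
lemma nondismantlable_dominating_eq:
  assumes nd: "nondismantlable V E" and a: "a \<in> V" and x: "x \<in> vert_bt V"
    and out: "out_nbrs (edges_bt V E) (Vtx a) \<subseteq> out_nbrs (edges_bt V E) x"
    and inn: "in_nbrs (edges_bt V E) (Vtx a) \<subseteq> in_nbrs (edges_bt V E) x"
  shows "x = Vtx a"
proof -
  have "(x, Top) \<in> edges_bt V E"
    using out a edges_bt_Top_iff[of "Vtx a" V E] by (auto simp: out_nbrs_def)
  moreover have "(Bot, x) \<in> edges_bt V E"
    using inn a edges_bt_Bot_iff[of "Vtx a" V E] by (auto simp: in_nbrs_def)
  ultimately obtain w where w: "w \<in> V" "x = Vtx w"
    using x by (auto simp: vert_bt_def edges_bt_Top_iff edges_bt_Bot_iff)
  have "out_nbrs E a \<subseteq> out_nbrs E w" "in_nbrs E a \<subseteq> in_nbrs E w"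
    using out inn w(2) by (auto dest: out_nbrs_edges_bt_Vtx_subsetD in_nbrs_edges_bt_Vtx_subsetD)
  with nd a w show ?thesis unfolding nondismantlable_def by blast
qed

theorem lemma5p2:
  fixes V :: "'a set" and E :: "('a \<times> 'a) set"
    and p :: "'a ext \<Rightarrow> 'a ext \<Rightarrow> 'a ext \<Rightarrow> 'a ext"
  assumes G: "digraph V E"
    and pol: "ternary_polymorphism (vert_bt V) (edges_bt V E) p"
    and maj: "\<forall>x\<in>vert_bt V. \<forall>y\<in>vert_bt V. p x y y = x"
  shows "(\<forall>a\<in>Vtx ` V \<union> {Bot}. \<forall>b\<in>Vtx ` V \<union> {Bot}. \<forall>c\<in>Vtx ` V \<union> {Bot}.
            out_nbrs (edges_bt V E) a \<subseteq> out_nbrs (edges_bt V E) (p a b c))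
       \<and> (\<forall>a\<in>Vtx ` V \<union> {Top}. \<forall>b\<in>Vtx ` V \<union> {Top}. \<forall>c\<in>Vtx ` V \<union> {Top}.
            in_nbrs (edges_bt V E) a \<subseteq> in_nbrs (edges_bt V E) (p a b c))
       \<and> (nondismantlable V E \<longrightarrow>
            (\<forall>a\<in>V. \<forall>b\<in>V. \<forall>c\<in>V. p (Vtx a) (Vtx b) (Vtx c) = Vtx a))"
proof (intro conjI impI ballI)
  have F: "edges_bt V E \<subseteq> vert_bt V \<times> vert_bt V"
    using G by (simp add: digraph_def edges_bt_subset)
  have Top: "\<forall>x\<in>vert_bt V. p x Top Top = x" and Bot: "\<forall>x\<in>vert_bt V. p x Bot Bot = x"
    using maj by (simp_all add: vert_bt_def)
  show out: "out_nbrs (edges_bt V E) a \<subseteq> out_nbrs (edges_bt V E) (p a b c)"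
    if "b \<in> Vtx ` V \<union> {Bot}" "c \<in> Vtx ` V \<union> {Bot}" for a b c
    using that by (intro polymorphism_out_nbrs_subset[OF pol F Top]) (simp_all add: edges_bt_Top_iff)
  show inn: "in_nbrs (edges_bt V E) a \<subseteq> in_nbrs (edges_bt V E) (p a b c)"
    if "b \<in> Vtx ` V \<union> {Top}" "c \<in> Vtx ` V \<union> {Top}" for a b c
    using that by (intro polymorphism_in_nbrs_subset[OF pol F Bot]) (simp_all add: edges_bt_Bot_iff)
  fix a b c assume nd: "nondismantlable V E" and abc: "a \<in> V" "b \<in> V" "c \<in> V"
  show "p (Vtx a) (Vtx b) (Vtx c) = Vtx a"
  proof (rule nondismantlable_dominating_eq[OF nd \<open>a \<in> V\<close>])
    show "p (Vtx a) (Vtx b) (Vtx c) \<in> vert_bt V"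
      using pol abc unfolding ternary_polymorphism_def vert_bt_def by blast
    show "out_nbrs (edges_bt V E) (Vtx a) \<subseteq> out_nbrs (edges_bt V E) (p (Vtx a) (Vtx b) (Vtx c))"
      by (rule out) (use abc in auto)
    show "in_nbrs (edges_bt V E) (Vtx a) \<subseteq> in_nbrs (edges_bt V E) (p (Vtx a) (Vtx b) (Vtx c))"
      by (rule inn) (use abc in auto)
  qed
qed

end
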